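(* Let $\mathcal S$ be a trajectory set. The following are equivalent: (1) $\bar\sigma(0)\ge 0$. (2) (LOP) holds, the hedging price functional $I$ is positive (i.e. $I(f)\ge0$ for every $f\in\mathcal E^+$), and $I(f)\le\bar I(f^+)$ for every $f\in\mathcal E$. Moreover, if one (and then both) of these conditions holds, then $\bar\sigma(f)=I(f)$ for every $f\in\mathcal E$ and $\bar I(f)=I(f)$ for every $f\in\mathcal E^+$.
   Context: Fix $s_0\in\mathbb R$. A trajectory set is any set $\mathcal S$ of real sequences $S=(S_j)_{j\in\mathbb N_0}$ with $S_0=s_0$. A simple portfolio $(V,n,H)$ consists of $V\in\mathbb R$, $n\in\mathbb N$ and functions $H_i:\mathcal S\to\mathbb R$, $0\le i\le n-1$, which are nonanticipating, i.e. $H_i(S)=h_i(S_0,\dots,S_i)$ for some (not necessarily measurable) $h_i:\mathbb R^{i+1}\to\mathbb R$. Its wealth process is $\Pi^{V,n,H}_j(S)=V+\sum_{i=0}^{\min\{j,n\}-1}H_i(S)(S_{i+1}-S_i)$, $j\in\mathbb N_0$, and $\Pi^{V,n,H}_\infty:=\Pi^{V,n,H}_n$. It is positive if $V\ge0$ and $\Pi^{V,n,H}_\infty\ge0$ on $\mathcal S$. A generalized portfolio is a sequence $(V_m,n_m,H_m)_{m\in\mathbb N_0}$ of simple portfolios with $(V_m,n_m,H_m)$ positive for every $m\ge1$; it is a positive generalized portfolio if moreover $\Pi^{V_0,n_0,H_0}_j\equiv0$ for all $j$. A financial position $f:\mathcal S\to[-\infty,+\infty]$ is superhedged by a generalized portfolio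 with initial endowment $V\in(-\infty,+\infty]$ if $f\le\sum_{m=0}^\infty\Pi^{V_m,n_m,H_m}_\infty$ pointwise on $\mathcal S$ and $V=\sum_{m=0}^\infty V_m$. For $f:\mathcal S\to[0,+\infty]$, $\bar I(f)$ is the infimum of all $V\in[0,+\infty]$ such that $f$ is superhedged by a positive generalized portfolio with initial endowment $V$; for any financial position $f$, $\bar\sigma(f)$ is the infimum of all $V\in(-\infty,+\infty]$ such that $f$ is superhedged by a generalized portfolio with initial endowment $V$. Let $\mathcal E=\{\Pi^{V,n,H}_\infty:(V,n,H)\text{ simple portfolio}\}$ and $\mathcal E^+=\{f\in\mathcal E: f\ge0 \text{ on }\mathcal S\}$. (LOP) is the condition: whenever two simple portfolios $(V_0,n_0,H_0)$, $(V_1,n_1,H_1)$ satisfy $\Pi^{V_1,n_1,H_1}_\infty(S)=\Pi^{V_0,n_0,H_0}_\infty(S)$ for all $S\in\mathcal S$, then $V_1=V_0$. Under (LOP), the hedging price functional $I:\mathcal E\to\mathbb R$, $I(\Pi^{V,n,H}_\infty)=V$, is well defined and linear. $f^+,f^-$ denote positive and negative parts. *)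

theory Defs
  imports "HOL-Analysis.Analysis"
begin

type_synonym traj = "nat \<Rightarrow> real"
type_synonym strategy = "nat \<Rightarrow> traj \<Rightarrow> real"

definition trajectory_set :: "real \<Rightarrow> traj set \<Rightarrow> bool" where
  "trajectory_set s0 SS \<longleftrightarrow> (\<forall>S\<in>SS. S 0 = s0)"

definition nonanticipating :: "traj set \<Rightarrow> nat \<Rightarrow> strategy \<Rightarrow> bool" where
  "nonanticipating SS n H \<longleftrightarrow>
     (\<forall>i<n. \<exists>h :: real list \<Rightarrow> real. \<forall>S\<in>SS. H i S = h (map S [0..<Suc i]))"

definition simple_portfolio :: "traj set \<Rightarrow> real \<Rightarrow> nat \<Rightarrow> strategy \<Rightarrow> bool" where
  "simple_portfolio SS V n H \<longleftrightarrow> n \<ge> 1 \<and> nonanticipating SS n H"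

definition wealth :: "real \<Rightarrow> nat \<Rightarrow> strategy \<Rightarrow> nat \<Rightarrow> traj \<Rightarrow> real" where
  "wealth V n H j S = V + (\<Sum>i<min j n. H i S * (S (Suc i) - S i))"

definition wealth_inf :: "real \<Rightarrow> nat \<Rightarrow> strategy \<Rightarrow> traj \<Rightarrow> real" where
  "wealth_inf V n H S = wealth V n H n S"

definition positive_portfolio :: "traj set \<Rightarrow> real \<Rightarrow> nat \<Rightarrow> strategy \<Rightarrow> bool" where
  "positive_portfolio SS V n H \<longleftrightarrow>
     simple_portfolio SS V n H \<and> V \<ge> 0 \<and> (\<forall>S\<in>SS. wealth_inf V n H S \<ge> 0)"

definition generalized_portfolio ::
  "traj set \<Rightarrow> (nat \<Rightarrow> real) \<Rightarrow> (nat \<Rightarrow> nat) \<Rightarrow> (nat \<Rightarrow> strategy) \<Rightarrow> bool" where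
  "generalized_portfolio SS Vs ns Hs \<longleftrightarrow>
     simple_portfolio SS (Vs 0) (ns 0) (Hs 0) \<and>
     (\<forall>m\<ge>1. positive_portfolio SS (Vs m) (ns m) (Hs m))"

definition positive_generalized_portfolio ::
  "traj set \<Rightarrow> (nat \<Rightarrow> real) \<Rightarrow> (nat \<Rightarrow> nat) \<Rightarrow> (nat \<Rightarrow> strategy) \<Rightarrow> bool" where
  "positive_generalized_portfolio SS Vs ns Hs \<longleftrightarrow>
     generalized_portfolio SS Vs ns Hs \<and>
     (\<forall>j. \<forall>S\<in>SS. wealth (Vs 0) (ns 0) (Hs 0) j S = 0)"

text \<open>Sum over m of a sequence whose terms for m >= 1 are nonnegative; value in
  (-infinity, +infinity]: first term plus the (extended) series of the nonnegative rest.\<close>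
definition gsum :: "(nat \<Rightarrow> real) \<Rightarrow> ereal" where
  "gsum x = ereal (x 0) + (\<Sum>m. ereal (x (Suc m)))"

definition superhedges ::
  "traj set \<Rightarrow> (traj \<Rightarrow> ereal) \<Rightarrow> (nat \<Rightarrow> real) \<Rightarrow> (nat \<Rightarrow> nat) \<Rightarrow> (nat \<Rightarrow> strategy) \<Rightarrow> ereal \<Rightarrow> bool" where
  "superhedges SS f Vs ns Hs V \<longleftrightarrow>
     (\<forall>S\<in>SS. f S \<le> gsum (\<lambda>m. wealth_inf (Vs m) (ns m) (Hs m) S)) \<and> V = gsum Vs"

definition upper_I :: "traj set \<Rightarrow> (traj \<Rightarrow> ereal) \<Rightarrow> ereal" where
  "upper_I SS f = Inf {V. V \<ge> 0 \<and> (\<exists>Vs ns Hs. positive_generalized_portfolio SS Vs ns Hs \<and>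
                                superhedges SS f Vs ns Hs V)}"

definition upper_sigma :: "traj set \<Rightarrow> (traj \<Rightarrow> ereal) \<Rightarrow> ereal" where
  "upper_sigma SS f = Inf {V. V \<noteq> -\<infinity> \<and> (\<exists>Vs ns Hs. generalized_portfolio SS Vs ns Hs \<and>
                                superhedges SS f Vs ns Hs V)}"

text \<open>Elements of E, identified through their values on SS.\<close>
definition in_E :: "traj set \<Rightarrow> (traj \<Rightarrow> real) \<Rightarrow> bool" where
  "in_E SS f \<longleftrightarrow> (\<exists>V n H. simple_portfolio SS V n H \<and> (\<forall>S\<in>SS. f S = wealth_inf V n H S))"

definition in_E_plus :: "traj set \<Rightarrow> (traj \<Rightarrow> real) \<Rightarrow> bool" where
  "in_E_plus SS f \<longleftrightarrow> in_E SS f \<and> (\<forall>S\<in>SS. f S \<ge> 0)"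

definition LOP :: "traj set \<Rightarrow> bool" where
  "LOP SS \<longleftrightarrow> (\<forall>V0 n0 H0 V1 n1 H1.
      simple_portfolio SS V0 n0 H0 \<longrightarrow> simple_portfolio SS V1 n1 H1 \<longrightarrow>
      (\<forall>S\<in>SS. wealth_inf V1 n1 H1 S = wealth_inf V0 n0 H0 S) \<longrightarrow> V1 = V0)"

text \<open>Hedging price functional (well defined under LOP).\<close>
definition hedging_price :: "traj set \<Rightarrow> (traj \<Rightarrow> real) \<Rightarrow> real" where
  "hedging_price SS f = (THE V. \<exists>n H. simple_portfolio SS V n H \<and>
                                   (\<forall>S\<in>SS. f S = wealth_inf V n H S))"

end

theory Submission
  imports Defs
begin

text \<open>
Write \<open>\<sigma>\<close> for \<^const>\<open>upper_sigma\<close> and \<open>J\<close> for \<^const>\<open>upper_I\<close>.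
If \<open>\<sigma>(0) \<ge> 0\<close>, no generalized portfolio superhedges the payoff of a simple portfolio
\<open>(V, n, H)\<close> for less than \<open>V\<close>: subtracting \<open>(V, n, H)\<close> from its zeroth component
would give a generalized portfolio superhedging \<open>0\<close> for less than \<open>0\<close>.
Hence \<open>\<sigma>\<close> agrees with \<open>I\<close> on \<open>\<E>\<close>, which gives (LOP); positivity of \<open>I\<close> and
\<open>I(f) \<le> J(f\<^sup>+)\<close> then follow from monotonicity of \<open>\<sigma>\<close> and \<open>\<sigma> \<le> J\<close>.
Conversely, if a generalized portfolio superhedges \<open>0\<close>, the positive part of minus
its zeroth payoff \<open>\<Pi>\<^sup>0\<close> is superhedged by its remaining (positive) components, so
\<open>-V\<^sub>0 = I(-\<Pi>\<^sup>0) \<le> J((-\<Pi>\<^sup>0)\<^sup>+) \<le> V\<^sub>1 + V\<^sub>2 + \<dots>\<close>: its endowment is nonnegative.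
\<close>

definition diff_strategy :: "nat \<Rightarrow> strategy \<Rightarrow> nat \<Rightarrow> strategy \<Rightarrow> strategy" where
  "diff_strategy n0 H0 n1 H1 =
     (\<lambda>i S. (if i < n0 then H0 i S else 0) - (if i < n1 then H1 i S else 0))"

lemma nonanticipating_truncate:
  assumes "nonanticipating SS n H"
  obtains h where "\<forall>S\<in>SS. (if i < n then H i S else 0) = h (map S [0..<Suc i])"
proof (cases "i < n")
  case True
  with assms obtain h where "\<forall>S\<in>SS. H i S = h (map S [0..<Suc i])"
    unfolding nonanticipating_def by blast
  with True show ?thesis by (intro that[of h]) simp
qed (intro that[of "\<lambda>_. 0"], simp)

lemma simple_portfolio_diff:
  assumes "simple_portfolio SS V0 n0 H0" "simple_portfolio SS V1 n1 H1"
  shows "simple_portfolio SS V (max n0 n1) (diff_strategy n0 H0 n1 H1)"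
  unfolding simple_portfolio_def nonanticipating_def
proof (intro conjI allI impI)
  show "1 \<le> max n0 n1" using assms by (simp add: simple_portfolio_def le_max_iff_disj)
  fix i assume "i < max n0 n1"
  obtain h0 where h0: "\<forall>S\<in>SS. (if i < n0 then H0 i S else 0) = h0 (map S [0..<Suc i])"
    using assms(1) nonanticipating_truncate
    unfolding simple_portfolio_def by metis
  obtain h1 where h1: "\<forall>S\<in>SS. (if i < n1 then H1 i S else 0) = h1 (map S [0..<Suc i])"
    using assms(2) nonanticipating_truncate
    unfolding simple_portfolio_def by metis
  show "\<exists>h. \<forall>S\<in>SS. diff_strategy n0 H0 n1 H1 i S = h (map S [0..<Suc i])"
    using h0 h1 by (intro exI[of _ "\<lambda>l. h0 l - h1 l"]) (simp add: diff_strategy_def)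
qed

lemma sum_lessThan_if_less:
  fixes a :: "nat \<Rightarrow> 'a::comm_monoid_add"
  assumes "n \<le> m"
  shows "(\<Sum>i<m. if i < n then a i else 0) = (\<Sum>i<n. a i)"
proof -
  have "{i\<in>{..<m}. i < n} = {..<n}" using assms by auto
  then show ?thesis by (simp add: sum.inter_filter[symmetric])
qed

lemma wealth_inf_diff:
  "wealth_inf (V0 - V1) (max n0 n1) (diff_strategy n0 H0 n1 H1) S
     = wealth_inf V0 n0 H0 S - wealth_inf V1 n1 H1 S"
proof -
  let ?gain = "\<lambda>n H i. if i < n then H i S * (S (Suc i) - S i) else 0"
  have "(\<Sum>i<max n0 n1. diff_strategy n0 H0 n1 H1 i S * (S (Suc i) - S i))
      = (\<Sum>i<max n0 n1. ?gain n0 H0 i) - (\<Sum>i<max n0 n1. ?gain n1 H1 i)"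
    unfolding sum_subtractf[symmetric] diff_strategy_def
    by (rule sum.cong) (auto simp: left_diff_distrib)
  also have "\<dots> = (\<Sum>i<n0. H0 i S * (S (Suc i) - S i)) - (\<Sum>i<n1. H1 i S * (S (Suc i) - S i))"
    by (simp add: sum_lessThan_if_less)
  finally show ?thesis by (simp add: wealth_inf_def wealth_def)
qed

lemma simple_portfolio_zero: "simple_portfolio SS 0 1 (\<lambda>_ _. 0)"
  unfolding simple_portfolio_def nonanticipating_def by auto

lemma wealth_zero_strategy [simp]: "wealth V n (\<lambda>_ _. 0) j S = V"
  by (simp add: wealth_def)

lemma wealth_inf_zero_strategy [simp]: "wealth_inf V n (\<lambda>_ _. 0) S = V"
  by (simp add: wealth_inf_def)

lemma gsum_single: "gsum ((\<lambda>_. 0)(k := a)) = ereal a"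
proof (cases k)
  case 0
  then show ?thesis by (simp add: gsum_def zero_ereal_def[symmetric])
next
  case (Suc k')
  have "(\<Sum>m. ereal (((\<lambda>_. 0)(k := a)) (Suc m)))
      = (\<Sum>m\<in>{k'}. ereal (((\<lambda>_. 0)(k := a)) (Suc m)))"
    by (rule suminf_finite) (auto simp: Suc zero_ereal_def)
  then show ?thesis using Suc by (simp add: gsum_def zero_ereal_def)
qed

lemma superhedges_single:
  assumes "\<forall>S\<in>SS. f S \<le> ereal (wealth_inf V n H S)"
  shows "superhedges SS f ((\<lambda>_. 0)(k := V)) ((\<lambda>_. 1)(k := n)) ((\<lambda>_ _ _. 0)(k := H)) (ereal V)"
proof -
  have "(\<lambda>m. wealth_inf (((\<lambda>_. 0)(k := V)) m) (((\<lambda>_. 1)(k := n)) m) (((\<lambda>_ _ _. 0)(k := H)) m) S)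
      = (\<lambda>_. 0)(k := wealth_inf V n H S)" for S
    by (rule ext) simp
  with assms show ?thesis unfolding superhedges_def by (simp add: gsum_single)
qed

lemma generalized_portfolio_single:
  assumes "simple_portfolio SS V n H"
  shows "generalized_portfolio SS ((\<lambda>_. 0)(0 := V)) ((\<lambda>_. 1)(0 := n)) ((\<lambda>_ _ _. 0)(0 := H))"
  using assms simple_portfolio_zero
  unfolding generalized_portfolio_def positive_portfolio_def by auto

lemma positive_generalized_portfolio_single:
  assumes "positive_portfolio SS V n H"
  shows "positive_generalized_portfolio SS
           ((\<lambda>_. 0)(1 := V)) ((\<lambda>_. 1)(1 := n)) ((\<lambda>_ _ _. 0)(1 := H))"
  using assms simple_portfolio_zero
  unfolding positive_generalized_portfolio_def generalized_portfolio_def positive_portfolio_def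
  by auto

lemma gsum_shift_0:
  assumes "\<And>m. 0 \<le> x (Suc m)"
  shows "ereal c \<le> gsum x \<longleftrightarrow> 0 \<le> gsum (x(0 := x 0 - c))"
proof -
  have "0 \<le> (\<Sum>m. ereal (x (Suc m)))" by (rule suminf_0_le) (use assms in auto)
  then show ?thesis unfolding gsum_def by (cases "\<Sum>m. ereal (x (Suc m))") auto
qed

lemma gsum_neq_minf:
  assumes "\<And>m. 0 \<le> x (Suc m)"
  shows "gsum x \<noteq> -\<infinity>"
proof -
  have "0 \<le> (\<Sum>m. ereal (x (Suc m)))" by (rule suminf_0_le) (use assms in auto)
  then show ?thesis unfolding gsum_def by auto
qed

lemma gsum_nonneg:
  assumes "0 \<le> x 0" "\<And>m. 0 \<le> x (Suc m)"
  shows "0 \<le> gsum x"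
  unfolding gsum_def using assms by (intro add_nonneg_nonneg suminf_0_le) auto

lemma generalized_portfolio_tail_nonneg:
  assumes "generalized_portfolio SS Vs ns Hs"
  shows "0 \<le> Vs (Suc m)" and "S \<in> SS \<Longrightarrow> 0 \<le> wealth_inf (Vs (Suc m)) (ns (Suc m)) (Hs (Suc m)) S"
  using assms unfolding generalized_portfolio_def positive_portfolio_def by auto

lemma upper_sigma_le:
  assumes "generalized_portfolio SS Vs ns Hs" "superhedges SS f Vs ns Hs V"
  shows "upper_sigma SS f \<le> V"
proof -
  have "V = gsum Vs" using assms(2) unfolding superhedges_def by blast
  moreover have "gsum Vs \<noteq> -\<infinity>"
    by (rule gsum_neq_minf) (rule generalized_portfolio_tail_nonneg(1)[OF assms(1)])
  ultimately show ?thesis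
    using assms unfolding upper_sigma_def by (blast intro: Inf_lower)
qed

lemma upper_I_le:
  assumes "positive_generalized_portfolio SS Vs ns Hs" "superhedges SS f Vs ns Hs V" "0 \<le> V"
  shows "upper_I SS f \<le> V"
  using assms unfolding upper_I_def by (blast intro: Inf_lower)

lemma upper_sigma_mono:
  assumes "\<forall>S\<in>SS. f S \<le> g S"
  shows "upper_sigma SS f \<le> upper_sigma SS g"
  unfolding upper_sigma_def
proof (rule Inf_superset_mono, clarify)
  fix V Vs ns Hs
  assume "V \<noteq> -\<infinity>" "generalized_portfolio SS Vs ns Hs" "superhedges SS g Vs ns Hs V"
  with assms show "\<exists>Vs ns Hs. generalized_portfolio SS Vs ns Hs \<and> superhedges SS f Vs ns Hs V"
    unfolding superhedges_def by (blast intro: order_trans)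
qed

lemma upper_sigma_le_upper_I: "upper_sigma SS f \<le> upper_I SS f"
  unfolding upper_sigma_def upper_I_def positive_generalized_portfolio_def
  by (rule Inf_superset_mono) auto

lemma hedging_price_eq:
  assumes "LOP SS" "simple_portfolio SS V n H" "\<forall>S\<in>SS. f S = wealth_inf V n H S"
  shows "hedging_price SS f = V"
  unfolding hedging_price_def
proof (rule the_equality)
  show "\<exists>n H. simple_portfolio SS V n H \<and> (\<forall>S\<in>SS. f S = wealth_inf V n H S)"
    using assms by blast
next
  fix V' assume "\<exists>n H. simple_portfolio SS V' n H \<and> (\<forall>S\<in>SS. f S = wealth_inf V' n H S)"
  with assms show "V' = V" unfolding LOP_def by metis
qed

lemma superhedging_endowment_ge_price:
  assumes sigma0: "0 \<le> upper_sigma SS (\<lambda>S. 0)"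
    and sp: "simple_portfolio SS V n H"
    and gp: "generalized_portfolio SS Vs ns Hs"
    and sh: "superhedges SS (\<lambda>S. ereal (wealth_inf V n H S)) Vs ns Hs W"
  shows "ereal V \<le> W"
proof -
  define Vs' where "Vs' = Vs(0 := Vs 0 - V)"
  define ns' where "ns' = ns(0 := max (ns 0) n)"
  define Hs' where "Hs' = Hs(0 := diff_strategy (ns 0) (Hs 0) n H)"
  let ?W = "\<lambda>S m. wealth_inf (Vs m) (ns m) (Hs m) S"
  have "simple_portfolio SS (Vs 0) (ns 0) (Hs 0)"
    using gp unfolding generalized_portfolio_def by blast
  with gp sp have gp': "generalized_portfolio SS Vs' ns' Hs'"
    unfolding generalized_portfolio_def Vs'_def ns'_def Hs'_def by (auto intro: simple_portfolio_diff)
  have "0 \<le> gsum (\<lambda>m. wealth_inf (Vs' m) (ns' m) (Hs' m) S)" if "S \<in> SS" for S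
  proof -
    have "(\<lambda>m. wealth_inf (Vs' m) (ns' m) (Hs' m) S) = (?W S)(0 := ?W S 0 - wealth_inf V n H S)"
      by (rule ext) (simp add: Vs'_def ns'_def Hs'_def wealth_inf_diff)
    moreover have "ereal (wealth_inf V n H S) \<le> gsum (?W S)"
      using sh that unfolding superhedges_def by blast
    ultimately show ?thesis
      using gsum_shift_0[of "?W S", OF generalized_portfolio_tail_nonneg(2)[OF gp that]] by simp
  qed
  then have "superhedges SS (\<lambda>S. 0) Vs' ns' Hs' (gsum Vs')"
    unfolding superhedges_def by blast
  then have "upper_sigma SS (\<lambda>S. 0) \<le> gsum Vs'" by (rule upper_sigma_le[OF gp'])
  with sigma0 have "0 \<le> gsum Vs'" by (rule order_trans)
  then have "ereal V \<le> gsum Vs"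
    unfolding Vs'_def using gsum_shift_0[of Vs, OF generalized_portfolio_tail_nonneg(1)[OF gp]] by simp
  then show ?thesis using sh unfolding superhedges_def by simp
qed

lemma upper_sigma_simple_payoff:
  assumes sigma0: "0 \<le> upper_sigma SS (\<lambda>S. 0)"
    and sp: "simple_portfolio SS V n H" and f: "\<forall>S\<in>SS. f S = wealth_inf V n H S"
  shows "upper_sigma SS (\<lambda>S. ereal (f S)) = ereal V"
proof (rule antisym)
  show "upper_sigma SS (\<lambda>S. ereal (f S)) \<le> ereal V"
    using f by (intro upper_sigma_le[OF generalized_portfolio_single[OF sp]] superhedges_single) simp
  show "ereal V \<le> upper_sigma SS (\<lambda>S. ereal (f S))"
    unfolding upper_sigma_def
  proof (rule Inf_greatest, clarify)
    fix W Vs ns Hs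
    assume "generalized_portfolio SS Vs ns Hs" "superhedges SS (\<lambda>S. ereal (f S)) Vs ns Hs W"
    with f show "ereal V \<le> W"
      by (intro superhedging_endowment_ge_price[OF sigma0 sp]) (auto simp: superhedges_def)
  qed
qed

lemma LOP_if_upper_sigma_zero_nonneg:
  assumes "0 \<le> upper_sigma SS (\<lambda>S. 0)"
  shows "LOP SS"
  unfolding LOP_def
proof (intro allI impI)
  fix V0 n0 H0 V1 n1 H1
  assume sp0: "simple_portfolio SS V0 n0 H0" and sp1: "simple_portfolio SS V1 n1 H1"
    and eq: "\<forall>S\<in>SS. wealth_inf V1 n1 H1 S = wealth_inf V0 n0 H0 S"
  have "ereal V1 = upper_sigma SS (\<lambda>S. ereal (wealth_inf V1 n1 H1 S))"
    by (rule upper_sigma_simple_payoff[OF assms sp1, symmetric]) simp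
  also have "\<dots> = ereal V0"
    by (rule upper_sigma_simple_payoff[OF assms sp0]) (rule eq)
  finally show "V1 = V0" by simp
qed

lemma upper_sigma_eq_hedging_price:
  assumes "0 \<le> upper_sigma SS (\<lambda>S. 0)" "in_E SS f"
  shows "upper_sigma SS (\<lambda>S. ereal (f S)) = ereal (hedging_price SS f)"
proof -
  obtain V n H where sp: "simple_portfolio SS V n H" and fV: "\<forall>S\<in>SS. f S = wealth_inf V n H S"
    using assms(2) unfolding in_E_def by blast
  have "hedging_price SS f = V"
    by (rule hedging_price_eq[OF LOP_if_upper_sigma_zero_nonneg[OF assms(1)] sp fV])
  with upper_sigma_simple_payoff[OF assms(1) sp fV] show ?thesis by simp
qed

lemma hedging_price_nonneg:
  assumes sigma0: "0 \<le> upper_sigma SS (\<lambda>S. 0)" and f: "in_E_plus SS f"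
  shows "0 \<le> hedging_price SS f"
proof -
  have "upper_sigma SS (\<lambda>S. 0) \<le> upper_sigma SS (\<lambda>S. ereal (f S))"
    using f unfolding in_E_plus_def by (intro upper_sigma_mono) simp
  also have "\<dots> = ereal (hedging_price SS f)"
    using f unfolding in_E_plus_def by (blast intro: upper_sigma_eq_hedging_price[OF sigma0])
  finally have "upper_sigma SS (\<lambda>S. 0) \<le> ereal (hedging_price SS f)" .
  with sigma0 have "0 \<le> ereal (hedging_price SS f)" by (rule order_trans)
  then show ?thesis by simp
qed

lemma hedging_price_le_upper_I_pos_part:
  assumes "0 \<le> upper_sigma SS (\<lambda>S. 0)" "in_E SS f"
  shows "ereal (hedging_price SS f) \<le> upper_I SS (\<lambda>S. ereal (max (f S) 0))"
proof -
  have "ereal (hedging_price SS f) = upper_sigma SS (\<lambda>S. ereal (f S))"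
    using upper_sigma_eq_hedging_price[OF assms] by simp
  also have "\<dots> \<le> upper_sigma SS (\<lambda>S. ereal (max (f S) 0))"
    by (rule upper_sigma_mono) simp
  also have "\<dots> \<le> upper_I SS (\<lambda>S. ereal (max (f S) 0))"
    by (rule upper_sigma_le_upper_I)
  finally show ?thesis .
qed

lemma upper_I_eq_hedging_price:
  assumes sigma0: "0 \<le> upper_sigma SS (\<lambda>S. 0)" and f: "in_E_plus SS f"
  shows "upper_I SS (\<lambda>S. ereal (f S)) = ereal (hedging_price SS f)"
proof (rule antisym)
  obtain V n H where sp: "simple_portfolio SS V n H" and fV: "\<forall>S\<in>SS. f S = wealth_inf V n H S"
    using f unfolding in_E_plus_def in_E_def by blast
  have price: "hedging_price SS f = V"
    using hedging_price_eq[OF LOP_if_upper_sigma_zero_nonneg[OF sigma0] sp fV] .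
  with hedging_price_nonneg[OF sigma0 f] f fV sp have "positive_portfolio SS V n H"
    unfolding positive_portfolio_def in_E_plus_def by auto
  then have "upper_I SS (\<lambda>S. ereal (f S)) \<le> ereal V"
  proof (rule upper_I_le[OF positive_generalized_portfolio_single])
    show "superhedges SS (\<lambda>S. ereal (f S))
            ((\<lambda>_. 0)(1 := V)) ((\<lambda>_. 1)(1 := n)) ((\<lambda>_ _ _. 0)(1 := H)) (ereal V)"
      using fV by (intro superhedges_single) simp
    show "0 \<le> ereal V" using hedging_price_nonneg[OF sigma0 f] price by simp
  qed
  with price show "upper_I SS (\<lambda>S. ereal (f S)) \<le> ereal (hedging_price SS f)" by simp
  have "ereal (hedging_price SS f) = upper_sigma SS (\<lambda>S. ereal (f S))"
    using upper_sigma_eq_hedging_price[OF sigma0] f unfolding in_E_plus_def by simp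
  also have "\<dots> \<le> upper_I SS (\<lambda>S. ereal (f S))" by (rule upper_sigma_le_upper_I)
  finally show "ereal (hedging_price SS f) \<le> upper_I SS (\<lambda>S. ereal (f S))" .
qed

lemma positive_generalized_portfolio_drop_0:
  assumes "generalized_portfolio SS Vs ns Hs"
  shows "positive_generalized_portfolio SS (Vs(0 := 0)) (ns(0 := 1)) (Hs(0 := \<lambda>_ _. 0))"
  using assms simple_portfolio_zero
  unfolding positive_generalized_portfolio_def generalized_portfolio_def by auto

lemma superhedges_neg_part_by_tail:
  assumes gp: "generalized_portfolio SS Vs ns Hs" and sh: "superhedges SS (\<lambda>S. 0) Vs ns Hs W"
  shows "superhedges SS (\<lambda>S. ereal (max (- wealth_inf (Vs 0) (ns 0) (Hs 0) S) 0))
           (Vs(0 := 0)) (ns(0 := 1)) (Hs(0 := \<lambda>_ _. 0)) (gsum (Vs(0 := 0)))"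
  unfolding superhedges_def
proof (intro conjI ballI refl)
  fix S assume S: "S \<in> SS"
  let ?W = "\<lambda>m. wealth_inf (Vs m) (ns m) (Hs m) S"
  define R where "R = (\<Sum>m. ereal (?W (Suc m)))"
  have "0 \<le> R"
    unfolding R_def using generalized_portfolio_tail_nonneg(2)[OF gp S] by (intro suminf_0_le) auto
  moreover have "0 \<le> ereal (?W 0) + R"
    using sh S unfolding superhedges_def gsum_def R_def by blast
  ultimately have "ereal (max (- ?W 0) 0) \<le> R" by (cases R) auto
  moreover have "gsum (\<lambda>m. wealth_inf ((Vs(0 := 0)) m) ((ns(0 := 1)) m) ((Hs(0 := \<lambda>_ _. 0)) m) S) = R"
    unfolding gsum_def R_def by (simp add: zero_ereal_def)
  ultimately show "ereal (max (- ?W 0) 0)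
      \<le> gsum (\<lambda>m. wealth_inf ((Vs(0 := 0)) m) ((ns(0 := 1)) m) ((Hs(0 := \<lambda>_ _. 0)) m) S)"
    by simp
qed

lemma upper_sigma_zero_nonneg_if_price_le_upper_I:
  assumes LOP: "LOP SS"
    and bound: "\<forall>f. in_E SS f \<longrightarrow> ereal (hedging_price SS f) \<le> upper_I SS (\<lambda>S. ereal (max (f S) 0))"
  shows "0 \<le> upper_sigma SS (\<lambda>S. 0)"
  unfolding upper_sigma_def
proof (rule Inf_greatest, clarify)
  fix W Vs ns Hs
  assume gp: "generalized_portfolio SS Vs ns Hs" and sh: "superhedges SS (\<lambda>S. 0) Vs ns Hs W"
  let ?n = "max 1 (ns 0)" and ?H = "diff_strategy 1 (\<lambda>_ _. 0) (ns 0) (Hs 0)"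
  define g where "g S = - wealth_inf (Vs 0) (ns 0) (Hs 0) S" for S
  have "simple_portfolio SS (Vs 0) (ns 0) (Hs 0)"
    using gp unfolding generalized_portfolio_def by blast
  then have sp: "simple_portfolio SS (0 - Vs 0) ?n ?H"
    using simple_portfolio_diff simple_portfolio_zero by blast
  have gW: "\<forall>S\<in>SS. g S = wealth_inf (0 - Vs 0) ?n ?H S"
    unfolding g_def wealth_inf_diff by simp
  have "in_E SS g" unfolding in_E_def using sp gW by blast
  with bound have "ereal (hedging_price SS g) \<le> upper_I SS (\<lambda>S. ereal (max (g S) 0))" by blast
  moreover have "hedging_price SS g = - Vs 0" using hedging_price_eq[OF LOP sp gW] by simp
  ultimately have "ereal (- Vs 0) \<le> upper_I SS (\<lambda>S. ereal (max (g S) 0))" by simp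
  also have "\<dots> \<le> gsum (Vs(0 := 0))"
  proof (rule upper_I_le[OF positive_generalized_portfolio_drop_0[OF gp]])
    show "superhedges SS (\<lambda>S. ereal (max (g S) 0))
        (Vs(0 := 0)) (ns(0 := 1)) (Hs(0 := \<lambda>_ _. 0)) (gsum (Vs(0 := 0)))"
      unfolding g_def by (rule superhedges_neg_part_by_tail[OF gp sh])
    show "0 \<le> gsum (Vs(0 := 0))"
      using generalized_portfolio_tail_nonneg(1)[OF gp] by (intro gsum_nonneg) simp_all
  qed
  finally have "ereal (- Vs 0) \<le> gsum (Vs(0 := 0))" .
  moreover have "0 \<le> (Vs(0 := 0)) (Suc m)" for m
    using generalized_portfolio_tail_nonneg(1)[OF gp] by simp
  ultimately have "0 \<le> gsum Vs" using gsum_shift_0[of "Vs(0 := 0)" "- Vs 0"] by simp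
  moreover have "W = gsum Vs" using sh unfolding superhedges_def by blast
  ultimately show "0 \<le> W" by simp
qed

theorem proposition3p3:
  fixes s0 :: real and SS :: "traj set"
  assumes "trajectory_set s0 SS"
  shows "(upper_sigma SS (\<lambda>S. 0) \<ge> 0 \<longleftrightarrow>
           (LOP SS \<and> (\<forall>f. in_E_plus SS f \<longrightarrow> hedging_price SS f \<ge> 0) \<and>
            (\<forall>f. in_E SS f \<longrightarrow>
               ereal (hedging_price SS f) \<le> upper_I SS (\<lambda>S. ereal (max (f S) 0)))))
       \<and> (upper_sigma SS (\<lambda>S. 0) \<ge> 0 \<longrightarrow>
           (\<forall>f. in_E SS f \<longrightarrow> upper_sigma SS (\<lambda>S. ereal (f S)) = ereal (hedging_price SS f)) \<and>
           (\<forall>f. in_E_plus SS f \<longrightarrow> upper_I SS (\<lambda>S. ereal (f S)) = ereal (hedging_price SS f)))"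
proof -
  let ?price_conditions = "LOP SS \<and> (\<forall>f. in_E_plus SS f \<longrightarrow> hedging_price SS f \<ge> 0) \<and>
    (\<forall>f. in_E SS f \<longrightarrow> ereal (hedging_price SS f) \<le> upper_I SS (\<lambda>S. ereal (max (f S) 0)))"
  have "upper_sigma SS (\<lambda>S. 0) \<ge> 0 \<longleftrightarrow> ?price_conditions"
  proof
    assume "upper_sigma SS (\<lambda>S. 0) \<ge> 0"
    then show ?price_conditions
      using LOP_if_upper_sigma_zero_nonneg hedging_price_nonneg hedging_price_le_upper_I_pos_part
      by blast
  next
    assume ?price_conditions
    then show "upper_sigma SS (\<lambda>S. 0) \<ge> 0"
      using upper_sigma_zero_nonneg_if_price_le_upper_I by blast
  qed
  then show ?thesis
    using upper_sigma_eq_hedging_price upper_I_eq_hedging_price by blast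
qed

end
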